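(* Let $f = \sigma_m \circ f_m \circ \sigma_{m-1} \circ f_{m-1} \circ \cdots \circ \sigma_1 \circ f_1$ be a CNN acting on bounded fields $\mathbb{Z}^2 \to \mathbb{R}$, where each $f_i(\bm{X}) = \bm{X} \ast K_i$ is a convolution with a finitely supported kernel $K_i \colon \mathbb{Z}^2 \to \mathbb{R}$ and each $\sigma_i \colon \mathbb{R} \to \mathbb{R}$ is a piecewise differentiable activation applied pointwise. If each combined layer $\sigma_i \circ f_i$ is equivariant with respect to arbitrary uniform motion (i.e. $(\sigma_i\circ f_i)(\bm{X} + \bm{C}) = (\sigma_i\circ f_i)(\bm{X}) + \bm{C}$ for all fields $\bm{X}$ and constant fields $\bm{C}$), then $f$ is an affine map.
   Context: Convolution: $(\bm{X}\ast K)(p) = \sum_{q \in \mathbb{Z}^2} \bm{X}(p+q)K(q)$. A constant field takes the same real value at every point of $\mathbb{Z}^2$. *)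

theory Defs
  imports "HOL-Analysis.Analysis"
begin

type_synonym field = "int \<times> int \<Rightarrow> real"

definition bounded_field :: "field \<Rightarrow> bool" where
  "bounded_field X \<longleftrightarrow> (\<exists>B. \<forall>p. \<bar>X p\<bar> \<le> B)"

definition finitely_supported :: "field \<Rightarrow> bool" where
  "finitely_supported K \<longleftrightarrow> finite {q. K q \<noteq> 0}"

definition conv :: "field \<Rightarrow> field \<Rightarrow> field" where
  "conv X K = (\<lambda>p. \<Sum>q\<in>{q. K q \<noteq> 0}. X (p + q) * K q)"

definition const_field :: "real \<Rightarrow> field" where
  "const_field c = (\<lambda>_. c)"

definition piecewise_differentiable :: "(real \<Rightarrow> real) \<Rightarrow> bool" where
  "piecewise_differentiable \<sigma> \<longleftrightarrow>
     (\<exists>S. (\<forall>a b. finite (S \<inter> {a..b})) \<and> (\<forall>x. x \<notin> S \<longrightarrow> \<sigma> differentiable (at x)))"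

definition layer :: "field \<Rightarrow> (real \<Rightarrow> real) \<Rightarrow> field \<Rightarrow> field" where
  "layer K \<sigma> X = (\<lambda>p. \<sigma> (conv X K p))"

text \<open>The CNN with layers [(K_1,sigma_1),...,(K_m,sigma_m)], layer 1 applied first.\<close>
definition cnn :: "(field \<times> (real \<Rightarrow> real)) list \<Rightarrow> field \<Rightarrow> field" where
  "cnn Ls X = foldl (\<lambda>Y (K, \<sigma>). layer K \<sigma> Y) X Ls"

definition equivariant_uniform_motion :: "(field \<Rightarrow> field) \<Rightarrow> bool" where
  "equivariant_uniform_motion g \<longleftrightarrow>
     (\<forall>X c. bounded_field X \<longrightarrow> g (\<lambda>p. X p + const_field c p) = (\<lambda>p. g X p + const_field c p))"

definition affine_on_bounded :: "(field \<Rightarrow> field) \<Rightarrow> bool" where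
  "affine_on_bounded g \<longleftrightarrow>
     (\<forall>X Y (t::real). bounded_field X \<longrightarrow> bounded_field Y \<longrightarrow>
        g (\<lambda>p. t * X p + (1 - t) * Y p) = (\<lambda>p. t * g X p + (1 - t) * g Y p))"

end

theory Submission
  imports Defs
begin

text \<open>Feeding a constant field c into an equivariant layer gives \<sigma>(c s) = \<sigma>(0) + c, where s is
  the sum of the kernel entries. Hence s \<noteq> 0 and \<sigma> is the affine function y \<mapsto> \<sigma>(0) + y/s, so each
  layer is a linear convolution followed by an affine scalar map, and a composition of affine
  maps is affine.\<close>

definition affine_field_map :: "(field \<Rightarrow> field) \<Rightarrow> bool" where
  "affine_field_map g \<longleftrightarrow>
     (\<forall>X Y (t::real). g (\<lambda>p. t * X p + (1 - t) * Y p) = (\<lambda>p. t * g X p + (1 - t) * g Y p))"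

lemma affine_field_map_comp:
  assumes "affine_field_map g" and "affine_field_map h"
  shows "affine_field_map (h \<circ> g)"
  using assms unfolding affine_field_map_def by simp

lemma affine_field_map_imp_affine_on_bounded:
  "affine_field_map g \<Longrightarrow> affine_on_bounded g"
  unfolding affine_field_map_def affine_on_bounded_def by blast

lemma conv_affine_combination:
  "conv (\<lambda>p. t * X p + (1 - t) * Y p) K p = t * conv X K p + (1 - t) * conv Y K p"
proof -
  have "conv (\<lambda>p. t * X p + (1 - t) * Y p) K p
      = (\<Sum>q\<in>{q. K q \<noteq> 0}. t * (X (p + q) * K q) + (1 - t) * (Y (p + q) * K q))"
    unfolding conv_def by (rule sum.cong) (auto simp: algebra_simps)
  then show ?thesis
    unfolding conv_def by (simp add: sum.distrib sum_distrib_left)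
qed

lemma conv_const_field:
  "conv (const_field c) K p = c * (\<Sum>q\<in>{q. K q \<noteq> 0}. K q)"
  unfolding conv_def const_field_def by (simp add: sum_distrib_left)

lemma equivariant_layer_activation_affine:
  assumes "equivariant_uniform_motion (layer K \<sigma>)"
  obtains a s where "s \<noteq> 0" and "\<sigma> = (\<lambda>y. a + y / s)"
proof -
  define s where "s = (\<Sum>q\<in>{q. K q \<noteq> 0}. K q)"
  have "bounded_field (const_field 0)"
    unfolding bounded_field_def const_field_def by auto
  moreover have "(\<lambda>p. const_field 0 p + const_field c p) = const_field c" for c
    by (simp add: const_field_def)
  ultimately have "layer K \<sigma> (const_field c) = (\<lambda>p. layer K \<sigma> (const_field 0) p + c)" for c
    using assms unfolding equivariant_uniform_motion_def by (metis const_field_def)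
  from fun_cong[OF this, of _ "(0, 0)"] have shift: "\<sigma> (c * s) = \<sigma> 0 + c" for c
    unfolding layer_def conv_const_field s_def by simp
  have "s \<noteq> 0"
    using shift[of 1] by auto
  moreover have "\<sigma> = (\<lambda>y. \<sigma> 0 + y / s)"
  proof
    show "\<sigma> y = \<sigma> 0 + y / s" for y
      using shift[of "y / s"] \<open>s \<noteq> 0\<close> by simp
  qed
  ultimately show thesis
    by (rule that)
qed

lemma equivariant_layer_affine:
  assumes "equivariant_uniform_motion (layer K \<sigma>)"
  shows "affine_field_map (layer K \<sigma>)"
proof -
  obtain a s where "s \<noteq> 0" and \<sigma>: "\<sigma> = (\<lambda>y. a + y / s)"
    using equivariant_layer_activation_affine[OF assms] by blast
  show ?thesis
    unfolding affine_field_map_def layer_def conv_affine_combination \<sigma>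
    by (intro allI ext) (simp add: divide_inverse algebra_simps)
qed

lemma cnn_Nil: "cnn [] = id"
  unfolding cnn_def by auto

lemma cnn_Cons: "cnn ((K, \<sigma>) # Ls) = cnn Ls \<circ> layer K \<sigma>"
  unfolding cnn_def by auto

lemma cnn_affine:
  assumes "\<forall>(K, \<sigma>) \<in> set Ls. equivariant_uniform_motion (layer K \<sigma>)"
  shows "affine_field_map (cnn Ls)"
  using assms
proof (induction Ls)
  case Nil
  show ?case
    unfolding cnn_Nil affine_field_map_def by simp
next
  case (Cons L Ls)
  obtain K \<sigma> where L: "L = (K, \<sigma>)"
    by fastforce
  have "affine_field_map (layer K \<sigma>)"
    using Cons.prems equivariant_layer_affine unfolding L by auto
  moreover have "affine_field_map (cnn Ls)"
    using Cons by auto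
  ultimately show ?case
    unfolding L cnn_Cons by (rule affine_field_map_comp)
qed

theorem mainTheorem7:
  fixes Ls :: "(field \<times> (real \<Rightarrow> real)) list"
  assumes "\<forall>(K, \<sigma>) \<in> set Ls. finitely_supported K"
    and "\<forall>(K, \<sigma>) \<in> set Ls. piecewise_differentiable \<sigma>"
    and "\<forall>(K, \<sigma>) \<in> set Ls. equivariant_uniform_motion (layer K \<sigma>)"
  shows "affine_on_bounded (cnn Ls)"
  using affine_field_map_imp_affine_on_bounded cnn_affine assms(3) by blast

end
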